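(* For all positive integers $n$, $$\sum_{j=0}^{n-2}\frac{A_{n,n-1,j}}{(1+x)^{n-1-j}(1+y)^{n-1-j}}+\frac{xy-(n-1)(x+y)}{xy}=\left(\frac{xy}{(1+x)(1+y)}\right)^{n-1}.$$
   Context: For a positive integer $n$ and $0\le j\le n-2$, $$A_{n,n-1,j}=\frac{(-1)^{n+j}}{xy}\sum_{l=j}^{n}\left(\binom lj\binom{n+j-1-l}{j}x^{l-j}y^{n-1-l}+\binom lj\binom{n+j-l}{j}x^{l-j}y^{n-l}\right),$$ where $x,y$ are indeterminates and binomial coefficients $\binom ab$ are $0$ if $b<0$ or $a<b$. *)

theory Defs imports Complex_Main begin

definition ibinom :: "int \<Rightarrow> int \<Rightarrow> int" where
  "ibinom a b = (if b < 0 \<or> a < b then 0 else int (nat a choose nat b))"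

text \<open>A_{n,n-1,j}, with x, y elements of a field of characteristic 0 (values of the indeterminates).\<close>
definition Acoef :: "nat \<Rightarrow> nat \<Rightarrow> 'a::field_char_0 \<Rightarrow> 'a \<Rightarrow> 'a" where
  "Acoef n j x y = (-1) ^ (n + j) / (x * y) *
     (\<Sum>l = j..n.
        of_int (ibinom (int l) (int j) * ibinom (int n + int j - 1 - int l) (int j))
          * x powi (int l - int j) * y powi (int n - 1 - int l)
      + of_int (ibinom (int l) (int j) * ibinom (int n + int j - int l) (int j))
          * x powi (int l - int j) * y powi (int n - int l))"

end

theory Submission
  imports Defs "HOL-Computational_Algebra.Formal_Power_Series"
begin

(* Let P_j(k) = binom_conv j k a b, the coefficient of X^k in ((1 - aX)(1 - bX))^-(j+1).
   At a = -x, b = -y, each A_{n,n-1,j} is the difference P_j(n-j) - P_j(n-1-j) divided by xy.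
   Weighted by T^j with T = (1 - a)(1 - b), the sum over j becomes the difference of the
   coefficients of X^n and X^(n-1) in Q (1 + r + ... + r^(n-1)), where Q = ((1 - aX)(1 - bX))^-1
   and r = T X Q. Because (1 - aX)(1 - bX) - T X = (1 - abX)(1 - X), this geometric sum equals
   (1 - r^n) / ((1 - abX)(1 - X)), whose coefficient difference is (ab)^n - T^n.
   Splitting off the term j = n - 1 and dividing by T^(n-1) gives the identity. *)

definition binom_conv :: "nat \<Rightarrow> nat \<Rightarrow> 'a::comm_semiring_1 \<Rightarrow> 'a \<Rightarrow> 'a" where
  "binom_conv j k a b =
     (\<Sum>i\<le>k. of_nat ((i + j) choose j) * of_nat ((k - i + j) choose j) * a ^ i * b ^ (k - i))"

lemma fps_nth_inverse_power_linear_factors: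
  fixes a b :: "'a::field_char_0"
  shows "fps_nth (inverse ((1 - fps_const a * fps_X) * (1 - fps_const b * fps_X)) ^ Suc j) k
         = binom_conv j k a b"
proof -
  have inverse_power: "inverse ((1 - fps_const c * fps_X) ^ Suc j)
      = Abs_fps (\<lambda>i. of_nat ((i + j) choose j) * c ^ i)" for c :: 'a
    using one_minus_const_fps_X_neg_power'[of "Suc j" c]
    by (simp add: binomial_symmetric[of j "_ + j"] add.commute)
  have "inverse ((1 - fps_const a * fps_X) * (1 - fps_const b * fps_X)) ^ Suc j
      = inverse ((1 - fps_const a * fps_X) ^ Suc j) * inverse ((1 - fps_const b * fps_X) ^ Suc j)"
    by (simp only: fps_inverse_mult fps_inverse_power power_mult_distrib)
  then show ?thesis
    by (simp only: inverse_power fps_mult_nth binom_conv_def atLeast0AtMost)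
       (simp add: mult_ac)
qed

lemma binom_conv_uminus:
  "binom_conv j k (- a) (- b) = (-1) ^ k * binom_conv j k (a :: 'a::comm_ring_1) b"
  unfolding binom_conv_def sum_distrib_left
proof (rule sum.cong)
  fix i assume "i \<in> {..k}"
  then have "(-1 :: 'a) ^ k = (-1) ^ i * (-1) ^ (k - i)"
    by (simp flip: power_add)
  then show "of_nat ((i + j) choose j) * of_nat ((k - i + j) choose j) * (- a) ^ i * (- b) ^ (k - i)
      = (-1) ^ k * (of_nat ((i + j) choose j) * of_nat ((k - i + j) choose j) * a ^ i * b ^ (k - i))"
    by (simp add: power_minus[of a] power_minus[of b] mult_ac)
qed simp

lemma fps_nth_geometric_sum:
  fixes Q :: "'a::comm_ring_1 fps"
  shows "fps_nth (Q * (\<Sum>j\<le>m. (fps_const c * fps_X * Q) ^ j)) k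
         = (\<Sum>j\<le>m. c ^ j * (if k < j then 0 else fps_nth (Q ^ Suc j) (k - j)))"
proof -
  have "Q * (\<Sum>j\<le>m. (fps_const c * fps_X * Q) ^ j) = (\<Sum>j\<le>m. fps_const (c ^ j) * (fps_X ^ j * Q ^ Suc j))"
    by (simp add: sum_distrib_left power_mult_distrib mult_ac)
  then show ?thesis
    by (simp add: fps_sum_nth fps_X_power_mult_nth del: power_Suc)
qed

lemma linear_factors_minus_fps_X:
  fixes a b :: "'a::comm_ring_1"
  shows "(1 - fps_const a * fps_X) * (1 - fps_const b * fps_X) - fps_const ((1 - a) * (1 - b)) * fps_X
         = (1 - fps_const (a * b) * fps_X) * (1 - fps_X)"
proof -
  have "fps_const ((1 - a) * (1 - b)) = 1 - fps_const a - fps_const b + fps_const a * fps_const b"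
    by (rule fps_ext) (simp add: algebra_simps)
  moreover have "fps_const (a * b) = fps_const a * fps_const b"
    by simp
  moreover have "(1 - A * X) * (1 - B * X) - (1 - A - B + A * B) * X = (1 - A * B * X) * (1 - X)"
    for A B X :: "'a fps"
    by (simp add: algebra_simps)
  ultimately show ?thesis
    by (simp only:)
qed

lemma sum_power_binom_conv_diff:
  fixes a b :: "'a::field_char_0"
  defines "T \<equiv> (1 - a) * (1 - b)"
  shows "(\<Sum>j\<le>m. T ^ j * (binom_conv j (Suc m - j) a b - binom_conv j (m - j) a b))
         = (a * b) ^ Suc m - T ^ Suc m"
proof -
  define Q where "Q = inverse ((1 - fps_const a * fps_X) * (1 - fps_const b * fps_X))"
  define r where "r = fps_const T * fps_X * Q"
  define F where "F = Q * (\<Sum>j\<le>m. r ^ j)"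
  define G :: "'a fps" where "G = inverse (1 - fps_const (a * b) * fps_X)"
  have "(1 - fps_const a * fps_X) * (1 - fps_const b * fps_X) * Q = 1"
    unfolding Q_def by (rule inverse_mult_eq_1') simp
  then have one_minus_r: "1 - r = (1 - fps_const (a * b) * fps_X) * (1 - fps_X) * Q"
    using linear_factors_minus_fps_X[of a b] by (simp add: r_def T_def algebra_simps)
  have "G * (1 - fps_const (a * b) * fps_X) = 1"
    unfolding G_def by (rule inverse_mult_eq_1) simp
  then have "(1 - fps_X) * F = G * (1 - fps_const (a * b) * fps_X) * ((1 - fps_X) * F)"
    by simp
  also have "\<dots> = G * ((1 - r) * (\<Sum>j\<le>m. r ^ j))"
    unfolding one_minus_r F_def by (simp only: mult_ac)
  also have "\<dots> = G * (1 - r ^ Suc m)"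
    by (simp only: sum_gp_basic)
  also have "\<dots> = G - fps_X ^ Suc m * (G * (fps_const T * Q) ^ Suc m)"
    by (simp add: r_def algebra_simps power_mult_distrib)
  finally have "fps_nth ((1 - fps_X) * F) (Suc m)
      = fps_nth (G - fps_X ^ Suc m * (G * (fps_const T * Q) ^ Suc m)) (Suc m)"
    by (rule arg_cong)
  then have "fps_nth F (Suc m) - fps_nth F m
      = fps_nth G (Suc m) - fps_nth (G * (fps_const T * Q) ^ Suc m) 0"
    by (simp add: left_diff_distrib fps_X_power_mult_nth del: power_Suc)
  moreover have "fps_nth G k = (a * b) ^ k" for k
    using one_minus_const_fps_X_neg_power'[of 1 "a * b"] by (simp add: G_def)
  moreover have "fps_nth F k = (\<Sum>j\<le>m. T ^ j * (if k < j then 0 else binom_conv j (k - j) a b))" for k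
    unfolding F_def r_def Q_def fps_nth_geometric_sum fps_nth_inverse_power_linear_factors ..
  ultimately show ?thesis
    by (simp add: Q_def fps_power_zeroth right_diff_distrib sum_subtractf)
qed

lemma sum_ibinom_powi_eq_binom_conv:
  fixes x y :: "'a::field"
  assumes "N = int (j + k)"
  shows "(\<Sum>l = j..j + k. of_int (ibinom (int l) (int j) * ibinom (N + int j - int l) (int j))
            * x powi (int l - int j) * y powi (N - int l)) = binom_conv j k x y"
    (is "(\<Sum>l = j..j + k. ?h l) = _")
proof -
  have "(\<Sum>l = j..j + k. ?h l) = (\<Sum>i\<le>k. ?h (i + j))"
    using sum.shift_bounds_cl_nat_ivl[of ?h 0 j k] by (simp add: atLeast0AtMost add.commute)
  also have "\<dots> = binom_conv j k x y"
    unfolding binom_conv_def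
  proof (rule sum.cong)
    fix i assume "i \<in> {..k}"
    then have "N + int j - int (i + j) = int (k - i + j)" "N - int (i + j) = int (k - i)"
      using assms by auto
    moreover have "int (i + j) - int j = int i"
      by simp
    moreover have "ibinom (int a) (int b) = int (a choose b)" for a b
      by (simp add: ibinom_def binomial_eq_0)
    ultimately show "?h (i + j) = of_nat ((i + j) choose j) * of_nat ((k - i + j) choose j) * x ^ i * y ^ (k - i)"
      by (simp only: power_int_of_nat of_int_mult of_int_of_nat_eq)
  qed simp
  finally show ?thesis .
qed

lemma Acoef_eq_binom_conv:
  fixes x y :: "'a::field_char_0"
  assumes "j < n"
  shows "Acoef n j x y
         = (binom_conv j (n - j) (- x) (- y) - binom_conv j (n - 1 - j) (- x) (- y)) / (x * y)"
proof -
  define f where "f l = of_int (ibinom (int l) (int j) * ibinom ((int n - 1) + int j - int l) (int j))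
    * x powi (int l - int j) * y powi (int n - 1 - int l)" for l
  define g where "g l = of_int (ibinom (int l) (int j) * ibinom (int n + int j - int l) (int j))
    * x powi (int l - int j) * y powi (int n - int l)" for l
  have "int n + int j - 1 - int l = (int n - 1) + int j - int l" for l
    by simp
  then have "Acoef n j x y = (-1) ^ (n + j) / (x * y) * (sum f {j..n} + sum g {j..n})"
    unfolding Acoef_def f_def g_def by (simp only: sum.distrib)
  moreover have "sum f {j..n} = binom_conv j (n - 1 - j) x y"
  proof -
    have "f n = 0" \<comment> \<open>its factor ibinom (j - 1) j vanishes, so y powi -1 is harmless\<close>
      by (simp add: f_def ibinom_def)
    moreover have "sum f {j..n - 1} = binom_conv j (n - 1 - j) x y"
      using sum_ibinom_powi_eq_binom_conv[of "int n - 1" j "n - 1 - j" x y] assms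
      by (simp add: f_def)
    moreover have "{j..n} = insert n {j..n - 1}" "n \<notin> {j..n - 1}"
      using assms by auto
    ultimately show ?thesis
      by simp
  qed
  moreover have "sum g {j..n} = binom_conv j (n - j) x y"
    using sum_ibinom_powi_eq_binom_conv[of "int n" j "n - j" x y] assms
    by (simp add: g_def)
  moreover have "(-1 :: 'a) ^ (n + j) = (-1) ^ (n - j)" "(-1 :: 'a) ^ (n - j) = - ((-1) ^ (n - 1 - j))"
    using assms by (simp_all add: minus_one_power_iff)
  ultimately show ?thesis
    by (simp add: binom_conv_uminus field_simps)
qed

lemma sum_Acoef_mult_power:
  fixes x y :: "'a::field_char_0"
  assumes "n > 0"
  shows "(\<Sum>j<n. Acoef n j x y * ((1 + x) * (1 + y)) ^ j)
         = ((x * y) ^ n - ((1 + x) * (1 + y)) ^ n) / (x * y)"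
proof -
  obtain m where n: "n = Suc m"
    using assms gr0_implies_Suc by blast
  have "(\<Sum>j<n. Acoef n j x y * ((1 + x) * (1 + y)) ^ j)
      = (\<Sum>j\<le>m. ((1 - - x) * (1 - - y)) ^ j
          * (binom_conv j (Suc m - j) (- x) (- y) - binom_conv j (m - j) (- x) (- y))) / (x * y)"
    unfolding n lessThan_Suc_atMost sum_divide_distrib
    by (rule sum.cong) (simp_all add: Acoef_eq_binom_conv)
  also have "\<dots> = ((x * y) ^ n - ((1 + x) * (1 + y)) ^ n) / (x * y)"
    by (simp only: sum_power_binom_conv_diff n) simp
  finally show ?thesis .
qed

lemma sum_divide_power_diff:
  fixes u :: "'a::field"
  assumes "u \<noteq> 0"
  shows "(\<Sum>j<m. c j / u ^ (m - j)) = (\<Sum>j<m. c j * u ^ j) / u ^ m"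
  unfolding sum_divide_distrib
proof (rule sum.cong)
  fix j assume "j \<in> {..<m}"
  then have "u ^ m = u ^ (m - j) * u ^ j"
    by (simp flip: power_add)
  then show "c j / u ^ (m - j) = c j * u ^ j / u ^ m"
    using assms by (simp add: field_simps)
qed simp

lemma sum_Acoef_mult_power_lessThan_pred:
  fixes x y :: "'a::field_char_0"
  assumes "n > 0"
  shows "(\<Sum>j<n - 1. Acoef n j x y * ((1 + x) * (1 + y)) ^ j)
         = ((x * y) ^ n - ((1 + x) * (1 + y)) ^ n) / (x * y)
           + (1 + of_nat n * (x + y)) / (x * y) * ((1 + x) * (1 + y)) ^ (n - 1)"
proof -
  obtain m where n: "n = Suc m"
    using assms gr0_implies_Suc by blast
  have "Acoef n m x y = - ((1 + of_nat n * (x + y)) / (x * y))"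
    by (simp add: n Acoef_eq_binom_conv binom_conv_def algebra_simps minus_divide_left)
  then show ?thesis
    using sum_Acoef_mult_power[OF assms, of x y] by (simp add: n diff_eq_eq)
qed

theorem lemma7:
  fixes x y :: "'a::field_char_0" and n :: nat
  assumes "n > 0" and "x \<noteq> 0" and "y \<noteq> 0" and "1 + x \<noteq> 0" and "1 + y \<noteq> 0"
  shows "(\<Sum>j<n - 1. Acoef n j x y / ((1 + x) ^ (n - 1 - j) * (1 + y) ^ (n - 1 - j)))
           + (x * y - of_nat (n - 1) * (x + y)) / (x * y)
         = (x * y / ((1 + x) * (1 + y))) ^ (n - 1)"
proof -
  obtain m where n: "n = Suc m"
    using assms(1) gr0_implies_Suc by blast
  define T where "T = (1 + x) * (1 + y)"
  have "T \<noteq> 0"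
    using assms by (simp add: T_def)
  have "(\<Sum>j<n - 1. Acoef n j x y / ((1 + x) ^ (n - 1 - j) * (1 + y) ^ (n - 1 - j)))
      = (\<Sum>j<n - 1. Acoef n j x y * T ^ j) / T ^ (n - 1)"
    using \<open>T \<noteq> 0\<close> unfolding T_def power_mult_distrib[symmetric] by (rule sum_divide_power_diff)
  also have "\<dots> = (((x * y) ^ n - T ^ n) / (x * y) + (1 + of_nat n * (x + y)) / (x * y) * T ^ (n - 1))
      / T ^ (n - 1)"
    unfolding T_def using assms(1) by (simp only: sum_Acoef_mult_power_lessThan_pred)
  also have "\<dots> = (x * y / T) ^ (n - 1) - (T - 1 - of_nat n * (x + y)) / (x * y)"
    using assms \<open>T \<noteq> 0\<close> by (simp add: n field_simps)
  moreover have "(x * y - of_nat (n - 1) * (x + y)) / (x * y) = (T - 1 - of_nat n * (x + y)) / (x * y)"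
    by (simp add: T_def n algebra_simps)
  ultimately show ?thesis
    unfolding T_def by simp
qed

end
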